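(* Suppose $a\colon\mathbb{N}\to\mathbb{C}$ has the property that for each $N\in\mathbb{N}$ there exist infinitely many $m\in\mathbb{N}$ such that $|a(m)|>N|a(m+j)|$ for every $j\in\mathbb{Z}$ with $1\le|j|\le N$. Then the power series $\sum_{n\ge0}a(n)x^n\in\mathbb{C}((x))$ does not satisfy any non-trivial (linear) differential equation $\sum_{i=0}^d q_i f^{(i)}=0$ with coefficients $q_i\in\mathbb{C}(x)$ not all zero, and hence is transcendental over $\mathbb{C}(x)$.
   Context: $\mathbb{C}((x))$ is the field of formal Laurent series in $x$ with complex coefficients, with the usual formal derivation $d/dx$; $f^{(i)}$ denotes the $i$-th derivative. *)

theory Defs
  imports "HOL-Computational_Algebra.Formal_Laurent_Series" "HOL-Computational_Algebra.Polynomial_FPS"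
begin

text \<open>The subfield C(x) of rational functions inside C((x)), via Laurent expansion at 0.\<close>
definition rat_funs :: "complex fls set" where
  "rat_funs = {fps_to_fls (fps_of_poly p) / fps_to_fls (fps_of_poly r) | p r. r \<noteq> 0}"

definition differentially_finite :: "complex fls \<Rightarrow> bool" where
  "differentially_finite f \<longleftrightarrow>
     (\<exists>d q. (\<forall>i\<le>d. q i \<in> rat_funs) \<and> (\<exists>i\<le>d. q i \<noteq> 0) \<and>
            (\<Sum>i\<le>d. q i * (fls_deriv ^^ i) f) = 0)"

definition algebraic_over_rat_funs :: "complex fls \<Rightarrow> bool" where
  "algebraic_over_rat_funs f \<longleftrightarrow>
     (\<exists>d c. (\<forall>i\<le>d. c i \<in> rat_funs) \<and> (\<exists>i\<le>d. c i \<noteq> 0) \<and>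
            (\<Sum>i\<le>d. c i * f ^ i) = 0)"

end

theory Submission
  imports Defs
begin

text \<open>
  If \<open>f = \<Sum>a(n) x^n\<close> satisfied \<open>\<Sum>i\<le>e. p_i f^(i) = 0\<close> with polynomials \<open>p_i\<close> and \<open>p_e \<noteq> 0\<close>,
  the coefficient of \<open>x^n\<close> would give, for all large \<open>n\<close>, the recurrence
  \<open>\<Sum>i,s. c_is (n - s + 1)^(i) a(n - s + i) = 0\<close> with rising factorials \<open>(z)^(i)\<close>.
  After division by \<open>n^e\<close> its coefficients converge, and among the terms with shift
  \<open>i - s = e - deg p_e\<close> only the one of order \<open>e\<close> survives, with limit \<open>lead_coeff p_e \<noteq> 0\<close>.
  Evaluating the recurrence where this shift lands on a sharp peak \<open>m\<close> of \<open>a\<close>, the terms at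
  \<open>a(m)\<close> have size about \<open>|lead_coeff p_e| |a(m)|\<close>, whereas the remaining boundedly many terms
  are each \<open>O(|a(m)| / N)\<close>; for large \<open>N\<close> they cannot cancel.

  Algebraic series are D-finite: if \<open>P(x, f) = 0\<close> with \<open>P\<close> of minimal degree \<open>m\<close> in \<open>y\<close>, then
  \<open>Q = P_y(x, f) \<noteq> 0\<close>, each \<open>Q^(2i) f^(i)\<close> lies in the ring \<open>\<complex>[x][f]\<close>, and this ring lies in
  the \<open>\<complex>(x)\<close>-span of \<open>1, f, \<dots>, f^(m-1)\<close>. So \<open>f, f', \<dots>, f^(m)\<close> are linearly dependent.
\<close>

section \<open>Rational functions as Laurent series\<close>

abbreviation fls_of_poly :: "'a::comm_ring_1 poly \<Rightarrow> 'a fls" where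
  "fls_of_poly p \<equiv> fps_to_fls (fps_of_poly p)"

lemma fls_of_poly_add: "fls_of_poly (p + q) = fls_of_poly p + fls_of_poly q"
  by (simp add: fps_of_poly_add)

lemma fls_of_poly_mult: "fls_of_poly (p * q) = fls_of_poly p * fls_of_poly q"
  by (simp add: fps_of_poly_mult fls_times_fps_to_fls)

lemma fls_of_poly_uminus: "fls_of_poly (- p) = - fls_of_poly p"
  by (simp add: fps_of_poly_uminus)

lemma fls_of_poly_smult: "fls_of_poly (smult c p) = fls_const c * fls_of_poly p"
  by (simp add: fps_of_poly_smult fls_times_fps_to_fls)

lemma fls_of_poly_of_nat: "fls_of_poly (of_nat n) = of_nat n"
  by (induction n) (simp_all add: fls_of_poly_add)

lemma fls_of_poly_eq_0_iff [simp]: "fls_of_poly p = 0 \<longleftrightarrow> p = 0"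
  by (metis fps_of_poly_0 fps_of_poly_eq_iff fps_to_fls_eq_0_iff)

lemma fls_deriv_fls_of_poly: "fls_deriv (fls_of_poly p) = fls_of_poly (pderiv p)"
  by (simp add: fls_deriv_fps_to_fls fps_of_poly_pderiv)

lemma rat_funsI: "r \<noteq> 0 \<Longrightarrow> fls_of_poly p / fls_of_poly r \<in> rat_funs"
  unfolding rat_funs_def by blast

lemma rat_funsE:
  assumes "x \<in> rat_funs"
  obtains p r where "r \<noteq> 0" "x = fls_of_poly p / fls_of_poly r"
  using assms unfolding rat_funs_def by blast

lemma fls_of_poly_in_rat_funs: "fls_of_poly p \<in> rat_funs"
  using rat_funsI[of 1 p] by simp

lemma zero_in_rat_funs: "0 \<in> rat_funs"
  using fls_of_poly_in_rat_funs[of 0] by simp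

lemma one_in_rat_funs: "1 \<in> rat_funs"
  using fls_of_poly_in_rat_funs[of 1] by simp

lemma rat_funs_add:
  assumes "x \<in> rat_funs" "y \<in> rat_funs"
  shows "x + y \<in> rat_funs"
proof -
  obtain p r p' r' where "r \<noteq> 0" "r' \<noteq> 0"
    and "x = fls_of_poly p / fls_of_poly r" "y = fls_of_poly p' / fls_of_poly r'"
    using assms by (elim rat_funsE)
  then have "x + y = fls_of_poly (p * r' + p' * r) / fls_of_poly (r * r')"
    by (simp add: fls_of_poly_add fls_of_poly_mult field_simps)
  with \<open>r \<noteq> 0\<close> \<open>r' \<noteq> 0\<close> show ?thesis
    by (simp add: rat_funsI)
qed

lemma rat_funs_mult:
  assumes "x \<in> rat_funs" "y \<in> rat_funs"
  shows "x * y \<in> rat_funs"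
proof -
  obtain p r p' r' where "r \<noteq> 0" "r' \<noteq> 0"
    and "x = fls_of_poly p / fls_of_poly r" "y = fls_of_poly p' / fls_of_poly r'"
    using assms by (elim rat_funsE)
  then show ?thesis
    using rat_funsI[of "r * r'" "p * p'"] by (simp add: fls_of_poly_mult)
qed

lemma rat_funs_uminus: "x \<in> rat_funs \<Longrightarrow> - x \<in> rat_funs"
  using rat_funs_mult[OF fls_of_poly_in_rat_funs[of "-1"]] by (simp add: fls_of_poly_uminus)

lemma rat_funs_divide:
  assumes "x \<in> rat_funs" "y \<in> rat_funs"
  shows "x / y \<in> rat_funs"
proof -
  obtain p r p' r' where "r \<noteq> 0" "r' \<noteq> 0"
    and "x = fls_of_poly p / fls_of_poly r" "y = fls_of_poly p' / fls_of_poly r'"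
    using assms by (elim rat_funsE)
  then show ?thesis
    using rat_funsI[of "r * p'" "p * r'"] zero_in_rat_funs
    by (cases "p' = 0") (simp_all add: fls_of_poly_mult)
qed

lemma rat_funs_sum: "(\<And>x. x \<in> A \<Longrightarrow> f x \<in> rat_funs) \<Longrightarrow> sum f A \<in> rat_funs"
  by (induction A rule: infinite_finite_induct) (simp_all add: zero_in_rat_funs rat_funs_add)

lemma rat_funs_common_denominator:
  fixes d :: nat
  assumes "\<forall>i\<le>d. q i \<in> rat_funs"
  obtains R p where "R \<noteq> 0" "\<forall>i\<le>d. fls_of_poly (p i) = fls_of_poly R * q i"
  using assms
proof (induction d arbitrary: thesis)
  case 0
  then have "q 0 \<in> rat_funs"
    by simp
  then obtain p r where "r \<noteq> 0" "q 0 = fls_of_poly p / fls_of_poly r"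
    by (rule rat_funsE)
  then show ?case
    by (intro "0.prems"(1)[of r "\<lambda>_. p"]) auto
next
  case (Suc d)
  obtain R p where R: "R \<noteq> 0" "\<forall>i\<le>d. fls_of_poly (p i) = fls_of_poly R * q i"
    using Suc.IH Suc.prems(2) by auto
  have "q (Suc d) \<in> rat_funs"
    using Suc.prems(2) by simp
  then obtain p' r where r: "r \<noteq> 0" "q (Suc d) = fls_of_poly p' / fls_of_poly r"
    by (rule rat_funsE)
  show ?case
  proof (rule Suc.prems(1))
    show "R * r \<noteq> 0"
      using R r by simp
    show "\<forall>i\<le>Suc d. fls_of_poly (if i = Suc d then p' * R else p i * r) = fls_of_poly (R * r) * q i"
      using R r by (auto simp: fls_of_poly_mult le_Suc_eq)
  qed
qed

lemma obtain_last_nonzero: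
  fixes d :: nat
  assumes "\<exists>i\<le>d. p i \<noteq> 0"
  obtains e where "e \<le> d" "p e \<noteq> 0" "\<forall>i\<in>{e<..d}. p i = 0"
proof -
  let ?P = "\<lambda>i. i \<le> d \<and> p i \<noteq> 0"
  define e where "e = Greatest ?P"
  have e: "?P e"
    unfolding e_def using assms by (rule GreatestI_ex_nat[where b = d]) auto
  have greatest: "i \<le> e" if "?P i" for i
    unfolding e_def using that by (rule Greatest_le_nat[where b = d]) auto
  show ?thesis
  proof (rule that)
    show "\<forall>i\<in>{e<..d}. p i = 0"
      using greatest by fastforce
  qed (use e in auto)
qed

lemma rat_funs_relation_clear_denominators:
  fixes d :: nat
  assumes "\<forall>i\<le>d. q i \<in> rat_funs" "\<exists>i\<le>d. q i \<noteq> 0" "(\<Sum>i\<le>d. q i * g i) = 0"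
  obtains e p where "e \<le> d" "p e \<noteq> 0" "(\<Sum>i\<le>e. fls_of_poly (p i) * g i) = 0"
proof -
  obtain R p where R: "R \<noteq> 0" and p: "\<forall>i\<le>d. fls_of_poly (p i) = fls_of_poly R * q i"
    using rat_funs_common_denominator[OF assms(1)] .
  have "\<exists>i\<le>d. p i \<noteq> 0"
    using assms(2) p R by (metis fls_of_poly_eq_0_iff mult_eq_0_iff)
  then obtain e where e: "e \<le> d" "p e \<noteq> 0" and above: "\<forall>i\<in>{e<..d}. p i = 0"
    by (rule obtain_last_nonzero)
  have "(\<Sum>i\<le>e. fls_of_poly (p i) * g i) = (\<Sum>i\<le>d. fls_of_poly (p i) * g i)"
    using e above by (intro sum.mono_neutral_left) auto
  also have "\<dots> = fls_of_poly R * (\<Sum>i\<le>d. q i * g i)"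
    using p by (simp add: sum_distrib_left mult.assoc)
  finally have "(\<Sum>i\<le>e. fls_of_poly (p i) * g i) = 0"
    using assms(3) by simp
  with e show ?thesis
    by (rule that[of e p])
qed

section \<open>Linear dependence over rational functions\<close>

definition rat_funs_span :: "nat \<Rightarrow> (nat \<Rightarrow> complex fls) \<Rightarrow> complex fls set" where
  "rat_funs_span d w = {\<Sum>k<d. r k * w k | r. \<forall>k<d. r k \<in> rat_funs}"

lemma rat_funs_spanI: "\<forall>k<d. r k \<in> rat_funs \<Longrightarrow> (\<Sum>k<d. r k * w k) \<in> rat_funs_span d w"
  unfolding rat_funs_span_def by blast

lemma rat_funs_spanE:
  assumes "v \<in> rat_funs_span d w"
  obtains r where "\<forall>k<d. r k \<in> rat_funs" "v = (\<Sum>k<d. r k * w k)"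
  using assms unfolding rat_funs_span_def by blast

lemma rat_funs_span_zero: "0 \<in> rat_funs_span d w"
  using rat_funs_spanI[of d "\<lambda>_. 0" w] zero_in_rat_funs by simp

lemma rat_funs_span_basis:
  assumes "k < d"
  shows "w k \<in> rat_funs_span d w"
proof -
  have "(\<Sum>j<d. (if j = k then 1 else 0) * w j) = (\<Sum>j<d. if j = k then w j else 0)"
    by (intro sum.cong) auto
  also have "\<dots> = w k"
    using assms by simp
  finally have "(\<Sum>j<d. (if j = k then 1 else 0) * w j) = w k" .
  then show ?thesis
    using rat_funs_spanI[of d "\<lambda>j. if j = k then 1 else 0" w] zero_in_rat_funs one_in_rat_funs
    by simp
qed

lemma rat_funs_span_add:
  assumes "u \<in> rat_funs_span d w" "v \<in> rat_funs_span d w"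
  shows "u + v \<in> rat_funs_span d w"
proof -
  obtain r r' where "\<forall>k<d. r k \<in> rat_funs" "\<forall>k<d. r' k \<in> rat_funs"
    and "u = (\<Sum>k<d. r k * w k)" "v = (\<Sum>k<d. r' k * w k)"
    using assms by (elim rat_funs_spanE)
  then show ?thesis
    using rat_funs_spanI[of d "\<lambda>k. r k + r' k" w]
    by (simp add: rat_funs_add sum.distrib distrib_right)
qed

lemma rat_funs_span_scale:
  assumes "c \<in> rat_funs" "v \<in> rat_funs_span d w"
  shows "c * v \<in> rat_funs_span d w"
proof -
  obtain r where "\<forall>k<d. r k \<in> rat_funs" "v = (\<Sum>k<d. r k * w k)"
    using assms(2) by (rule rat_funs_spanE)
  then show ?thesis
    using assms(1) rat_funs_spanI[of d "\<lambda>k. c * r k" w]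
    by (simp add: rat_funs_mult sum_distrib_left mult.assoc)
qed

lemma rat_funs_span_sum:
  "(\<And>x. x \<in> A \<Longrightarrow> f x \<in> rat_funs_span d w) \<Longrightarrow> sum f A \<in> rat_funs_span d w"
  by (induction A rule: infinite_finite_induct) (simp_all add: rat_funs_span_zero rat_funs_span_add)

lemma rat_funs_span_SucE:
  assumes "v \<in> rat_funs_span (Suc d) w"
  obtains c u where "c \<in> rat_funs" "u \<in> rat_funs_span d w" "v = u + c * w d"
proof -
  obtain r where r: "\<forall>k<Suc d. r k \<in> rat_funs" and v: "v = (\<Sum>k<Suc d. r k * w k)"
    using assms by (rule rat_funs_spanE)
  show ?thesis
  proof (rule that)
    show "r d \<in> rat_funs"
      using r by simp
    show "(\<Sum>k<d. r k * w k) \<in> rat_funs_span d w"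
      using r by (intro rat_funs_spanI) simp
    show "v = (\<Sum>k<d. r k * w k) + r d * w d"
      using v by simp
  qed
qed

definition rat_funs_dependent :: "'i set \<Rightarrow> ('i \<Rightarrow> complex fls) \<Rightarrow> bool" where
  "rat_funs_dependent I v \<longleftrightarrow>
     (\<exists>q. (\<forall>i\<in>I. q i \<in> rat_funs) \<and> (\<exists>i\<in>I. q i \<noteq> 0) \<and> (\<Sum>i\<in>I. q i * v i) = 0)"

lemma rat_funs_dependent_eliminate:
  assumes "finite I" "i0 \<in> I" "\<forall>i\<in>I. c i \<in> rat_funs" "c i0 \<noteq> 0"
    and "rat_funs_dependent (I - {i0}) (\<lambda>i. v i - c i / c i0 * v i0)"
  shows "rat_funs_dependent I v"
proof -
  obtain q' where q': "\<forall>i\<in>I - {i0}. q' i \<in> rat_funs" "\<exists>i\<in>I - {i0}. q' i \<noteq> 0"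
    "(\<Sum>i\<in>I - {i0}. q' i * (v i - c i / c i0 * v i0)) = 0"
    using assms(5) unfolding rat_funs_dependent_def by blast
  define q where "q i = (if i = i0 then - (\<Sum>j\<in>I - {i0}. q' j * (c j / c i0)) else q' i)" for i
  have "(\<Sum>i\<in>I. q i * v i) = q i0 * v i0 + (\<Sum>i\<in>I - {i0}. q i * v i)"
    using assms(1,2) by (simp add: sum.remove)
  also have "(\<Sum>i\<in>I - {i0}. q i * v i) = (\<Sum>i\<in>I - {i0}. q' i * v i)"
    by (intro sum.cong) (auto simp: q_def)
  also have "q i0 * v i0 + \<dots> = (\<Sum>i\<in>I - {i0}. q' i * (v i - c i / c i0 * v i0))"
    by (simp add: q_def sum_distrib_right sum_subtractf right_diff_distrib mult.assoc)
  finally have "(\<Sum>i\<in>I. q i * v i) = 0"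
    using q'(3) by simp
  moreover have "q i0 \<in> rat_funs"
    using q'(1) assms(2,3) unfolding q_def
    by (auto intro!: rat_funs_uminus rat_funs_sum rat_funs_mult rat_funs_divide)
  then have "\<forall>i\<in>I. q i \<in> rat_funs"
    using q'(1) unfolding q_def by auto
  moreover have "\<exists>i\<in>I. q i \<noteq> 0"
    using q'(2) by (auto simp: q_def)
  ultimately show ?thesis
    unfolding rat_funs_dependent_def by blast
qed

lemma rat_funs_dependent_if_card_gt:
  fixes v :: "'i \<Rightarrow> complex fls"
  assumes "finite I" "card I > d" "\<forall>i\<in>I. v i \<in> rat_funs_span d w"
  shows "rat_funs_dependent I v"
  using assms
proof (induction d arbitrary: I v)
  case 0
  then have "I \<noteq> {}" "\<forall>i\<in>I. v i = 0"
    by (auto simp: rat_funs_span_def)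
  then show ?case
    unfolding rat_funs_dependent_def by (intro exI[of _ "\<lambda>_. 1"]) (auto simp: one_in_rat_funs)
next
  case (Suc d)
  have "\<forall>i\<in>I. \<exists>c u. c \<in> rat_funs \<and> u \<in> rat_funs_span d w \<and> v i = u + c * w d"
    using Suc.prems(3) by (blast elim: rat_funs_span_SucE)
  then obtain c u where c: "\<forall>i\<in>I. c i \<in> rat_funs" and u: "\<forall>i\<in>I. u i \<in> rat_funs_span d w"
    and v: "\<forall>i\<in>I. v i = u i + c i * w d"
    by metis
  show ?case
  proof (cases "\<forall>i\<in>I. c i = 0")
    case True
    with u v show ?thesis
      using Suc.IH[of I v] Suc.prems(1,2) by auto
  next
    case False
    then obtain i0 where i0: "i0 \<in> I" "c i0 \<noteq> 0"
      by blast
    have "v i - c i / c i0 * v i0 \<in> rat_funs_span d w" if "i \<in> I" for i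
    proof -
      have "v i - c i / c i0 * v i0 = u i + (- (c i / c i0)) * u i0"
        using v that i0 by (simp add: algebra_simps)
      then show ?thesis
        using u c that i0
        by (metis rat_funs_span_add rat_funs_span_scale rat_funs_uminus rat_funs_divide)
    qed
    then have "rat_funs_dependent (I - {i0}) (\<lambda>i. v i - c i / c i0 * v i0)"
      using Suc.prems(1,2) i0 by (intro Suc.IH) auto
    then show ?thesis
      by (rule rat_funs_dependent_eliminate[OF Suc.prems(1) i0(1) c i0(2)])
  qed
qed

section \<open>Algebraic series are differentially finite\<close>

lemma fls_deriv_sum_poly_powers:
  fixes f :: "'a::idom fls"
  shows "fls_deriv (\<Sum>k\<le>Suc m. fls_of_poly (p k) * f ^ k) =
    (\<Sum>k\<le>m. fls_of_poly (smult (of_nat (Suc k)) (p (Suc k))) * f ^ k) * fls_deriv f +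
    (\<Sum>k\<le>Suc m. fls_of_poly (pderiv (p k)) * f ^ k)"
proof -
  have "fls_deriv (\<Sum>k\<le>Suc m. fls_of_poly (p k) * f ^ k) =
      (\<Sum>k\<le>Suc m. of_nat k * fls_of_poly (p k) * f ^ (k - 1)) * fls_deriv f +
      (\<Sum>k\<le>Suc m. fls_of_poly (pderiv (p k)) * f ^ k)"
    by (simp add: fls_deriv_sum fls_deriv_power fls_deriv_fls_of_poly sum.distrib
        sum_distrib_left sum_distrib_right algebra_simps del: sum.atMost_Suc)
  also have "(\<Sum>k\<le>Suc m. of_nat k * fls_of_poly (p k) * f ^ (k - 1)) =
      (\<Sum>k\<le>m. fls_of_poly (smult (of_nat (Suc k)) (p (Suc k))) * f ^ k)"
    by (simp only: sum.atMost_Suc_shift) (simp add: fls_of_poly_smult fls_of_nat del: of_nat_Suc)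
  finally show ?thesis .
qed

inductive_set poly_subring :: "'a::comm_ring_1 fls \<Rightarrow> 'a fls set" for f where
  poly: "fls_of_poly p \<in> poly_subring f"
| gen: "f \<in> poly_subring f"
| add: "u \<in> poly_subring f \<Longrightarrow> v \<in> poly_subring f \<Longrightarrow> u + v \<in> poly_subring f"
| mult: "u \<in> poly_subring f \<Longrightarrow> v \<in> poly_subring f \<Longrightarrow> u * v \<in> poly_subring f"

lemma poly_subring_one: "1 \<in> poly_subring f"
  using poly_subring.poly[of 1] by simp

lemma poly_subring_uminus: "u \<in> poly_subring f \<Longrightarrow> - u \<in> poly_subring f"
  using poly_subring.mult[OF poly_subring.poly[of "-1"]] by (simp add: fls_of_poly_uminus)

lemma poly_subring_diff: "u \<in> poly_subring f \<Longrightarrow> v \<in> poly_subring f \<Longrightarrow> u - v \<in> poly_subring f"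
  using poly_subring.add[OF _ poly_subring_uminus] by (metis diff_conv_add_uminus)

lemma poly_subring_of_nat: "of_nat n \<in> poly_subring f"
  using poly_subring.poly[of "of_nat n"] by (simp add: fls_of_poly_of_nat)

lemma poly_subring_power: "u \<in> poly_subring f \<Longrightarrow> u ^ n \<in> poly_subring f"
  by (induction n) (simp_all add: poly_subring_one poly_subring.mult)

lemma poly_subring_sum: "(\<And>x. x \<in> A \<Longrightarrow> g x \<in> poly_subring f) \<Longrightarrow> sum g A \<in> poly_subring f"
  by (induction A rule: infinite_finite_induct)
    (simp_all add: poly_subring.add poly_subring.poly[of 0, simplified])

lemma poly_subring_fls_deriv:
  fixes f :: "'a::idom fls"
  assumes Q: "Q \<in> poly_subring f" and Qf: "Q * fls_deriv f \<in> poly_subring f"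
    and "u \<in> poly_subring f"
  shows "Q * fls_deriv u \<in> poly_subring f"
  using \<open>u \<in> poly_subring f\<close>
proof (induction u rule: poly_subring.induct)
  case (poly p)
  then show ?case
    using Q by (simp add: fls_deriv_fls_of_poly poly_subring.mult poly_subring.poly)
next
  case gen
  then show ?case
    using Qf .
next
  case (add u v)
  then show ?case
    by (simp add: distrib_left poly_subring.add)
next
  case (mult u v)
  have "Q * fls_deriv (u * v) = u * (Q * fls_deriv v) + (Q * fls_deriv u) * v"
    by (simp add: algebra_simps)
  then show ?case
    using mult by (simp add: poly_subring.add poly_subring.mult)
qed

text \<open>The factor \<open>Q\<^sup>2\<close> per derivative absorbs the new denominator \<open>Q\<close> of the derivative and
  the one coming from differentiating the previous power of \<open>Q\<close>.\<close>

lemma poly_subring_higher_deriv: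
  fixes f :: "'a::idom fls"
  assumes Q: "Q \<in> poly_subring f" and Qf: "Q * fls_deriv f \<in> poly_subring f"
  shows "Q ^ (2 * i) * (fls_deriv ^^ i) f \<in> poly_subring f"
proof (induction i)
  case 0
  then show ?case
    by (simp add: poly_subring.gen)
next
  case (Suc i)
  define G where "G = Q ^ (2 * i) * (fls_deriv ^^ i) f"
  have "fls_deriv (Q ^ (2 * i)) * Q = of_nat (2 * i) * Q ^ (2 * i) * fls_deriv Q"
  proof (cases i)
    case (Suc j)
    have "fls_deriv (Q ^ (2 * i)) * Q = of_nat (2 * i) * (Q ^ (2 * i - 1) * Q) * fls_deriv Q"
      by (simp add: fls_deriv_power mult_ac)
    also have "Q ^ (2 * i - 1) * Q = Q ^ (2 * i)"
      using Suc by (simp flip: power_Suc2)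
    finally show ?thesis .
  qed simp
  then have "Q ^ (2 * Suc i) * (fls_deriv ^^ Suc i) f =
      Q * (Q * fls_deriv G) - of_nat (2 * i) * (Q * fls_deriv Q) * G"
    unfolding G_def by (simp add: algebra_simps power2_eq_square)
  also have "\<dots> \<in> poly_subring f"
    using Suc G_def
    by (intro poly_subring_diff poly_subring.mult poly_subring_of_nat Q
        poly_subring_fls_deriv[OF Q Qf]) simp_all
  finally show ?case .
qed

lemma rat_funs_span_powers_mult_gen:
  assumes "p m \<noteq> 0" "(\<Sum>k\<le>m. fls_of_poly (p k) * f ^ k) = 0"
    and "v \<in> rat_funs_span m (\<lambda>k. f ^ k)"
  shows "f * v \<in> rat_funs_span m (\<lambda>k. f ^ k)"
proof -
  have "fls_of_poly (p m) * f ^ m = - (\<Sum>k<m. fls_of_poly (p k) * f ^ k)"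
    using assms(2) by (simp add: lessThan_Suc_atMost[symmetric] eq_neg_iff_add_eq_0 add.commute)
  with assms(1) have "f ^ m = - (\<Sum>k<m. fls_of_poly (p k) * f ^ k) / fls_of_poly (p m)"
    by (simp add: field_simps)
  also have "\<dots> = (\<Sum>k<m. (- fls_of_poly (p k) / fls_of_poly (p m)) * f ^ k)"
    by (simp add: sum_divide_distrib sum_negf)
  finally have top_eq: "f ^ m = (\<Sum>k<m. (- fls_of_poly (p k) / fls_of_poly (p m)) * f ^ k)" .
  have top: "f ^ m \<in> rat_funs_span m (\<lambda>k. f ^ k)"
    by (subst top_eq, rule rat_funs_spanI)
      (simp add: rat_funs_divide rat_funs_uminus fls_of_poly_in_rat_funs)
  have shifted: "f ^ Suc k \<in> rat_funs_span m (\<lambda>k. f ^ k)" if "k < m" for k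
  proof (cases "Suc k = m")
    case False
    with that show ?thesis
      using rat_funs_span_basis[of "Suc k" m "\<lambda>k. f ^ k"] by simp
  qed (use top in simp)
  obtain r where r: "\<forall>k<m. r k \<in> rat_funs" and v: "v = (\<Sum>k<m. r k * f ^ k)"
    using assms(3) by (rule rat_funs_spanE)
  have "f * v = (\<Sum>k<m. r k * f ^ Suc k)"
    unfolding v by (simp add: sum_distrib_left mult_ac)
  also have "\<dots> \<in> rat_funs_span m (\<lambda>k. f ^ k)"
    using r shifted by (intro rat_funs_span_sum rat_funs_span_scale) auto
  finally show ?thesis .
qed

lemma poly_subring_subset_rat_funs_span:
  assumes "0 < m" "p m \<noteq> 0" "(\<Sum>k\<le>m. fls_of_poly (p k) * f ^ k) = 0"
  shows "poly_subring f \<subseteq> rat_funs_span m (\<lambda>k. f ^ k)"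
proof -
  let ?V = "rat_funs_span m (\<lambda>k. f ^ k)"
  have one: "1 \<in> ?V"
    using rat_funs_span_basis[of 0 m "\<lambda>k. f ^ k"] assms(1) by simp
  have powers: "f ^ k * v \<in> ?V" if "v \<in> ?V" for k v
    using that by (induction k)
      (simp_all add: mult.assoc rat_funs_span_powers_mult_gen[OF assms(2,3)])
  have mult: "u * v \<in> ?V" if "u \<in> ?V" "v \<in> ?V" for u v
  proof -
    obtain r where r: "\<forall>k<m. r k \<in> rat_funs" and u: "u = (\<Sum>k<m. r k * f ^ k)"
      using \<open>u \<in> ?V\<close> by (rule rat_funs_spanE)
    have "u * v = (\<Sum>k<m. r k * (f ^ k * v))"
      unfolding u by (simp add: sum_distrib_right mult.assoc)
    also have "\<dots> \<in> ?V"
      using r \<open>v \<in> ?V\<close> by (intro rat_funs_span_sum rat_funs_span_scale powers) auto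
    finally show ?thesis .
  qed
  show ?thesis
  proof
    fix u
    assume "u \<in> poly_subring f"
    then show "u \<in> ?V"
    proof (induction u rule: poly_subring.induct)
      case (poly p)
      then show ?case
        using rat_funs_span_scale[OF fls_of_poly_in_rat_funs one] by simp
    next
      case gen
      then show ?case
        using powers[OF one, of 1] by simp
    qed (simp_all add: rat_funs_span_add mult)
  qed
qed

lemma algebraic_over_rat_funs_minimal_relation:
  assumes "algebraic_over_rat_funs f"
  obtains p m where "p m \<noteq> 0" "(\<Sum>k\<le>m. fls_of_poly (p k) * f ^ k) = 0"
    "\<forall>n<m. \<forall>p'. p' n \<noteq> 0 \<longrightarrow> (\<Sum>k\<le>n. fls_of_poly (p' k) * f ^ k) \<noteq> 0"
proof -
  let ?rel = "\<lambda>n. \<exists>p. p n \<noteq> 0 \<and> (\<Sum>k\<le>n. fls_of_poly (p k) * f ^ k) = 0"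
  have "\<exists>n. ?rel n"
    using assms unfolding algebraic_over_rat_funs_def
    by (blast elim: rat_funs_relation_clear_denominators)
  define m where "m = (LEAST n. ?rel n)"
  obtain p where p: "p m \<noteq> 0" "(\<Sum>k\<le>m. fls_of_poly (p k) * f ^ k) = 0"
    using LeastI_ex[OF \<open>\<exists>n. ?rel n\<close>] unfolding m_def by blast
  moreover have "\<forall>n<m. \<forall>p'. p' n \<noteq> 0 \<longrightarrow> (\<Sum>k\<le>n. fls_of_poly (p' k) * f ^ k) \<noteq> 0"
    using not_less_Least[of _ ?rel] unfolding m_def by blast
  ultimately show ?thesis
    by (rule that[of p m])
qed

lemma differentially_finite_if_algebraic:
  assumes "algebraic_over_rat_funs f"
  shows "differentially_finite f"
proof -
  obtain p m where p: "p m \<noteq> 0" "(\<Sum>k\<le>m. fls_of_poly (p k) * f ^ k) = 0"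
    and minimal: "\<forall>n<m. \<forall>p'. p' n \<noteq> 0 \<longrightarrow> (\<Sum>k\<le>n. fls_of_poly (p' k) * f ^ k) \<noteq> 0"
    by (rule algebraic_over_rat_funs_minimal_relation[OF assms])
  obtain m' where m: "m = Suc m'"
    using p by (cases m) auto
  text \<open>\<open>Q\<close> is the partial derivative in \<open>y\<close> of the minimal relation \<open>P(x, y)\<close>, evaluated at \<open>y = f\<close>.\<close>
  define Q where "Q = (\<Sum>k\<le>m'. fls_of_poly (smult (of_nat (Suc k)) (p (Suc k))) * f ^ k)"
  have "Q \<noteq> 0"
    unfolding Q_def using minimal[rule_format, of m'] p(1) m by (simp del: of_nat_Suc)
  have "Q * fls_deriv f + (\<Sum>k\<le>m. fls_of_poly (pderiv (p k)) * f ^ k) =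
      fls_deriv (\<Sum>k\<le>m. fls_of_poly (p k) * f ^ k)"
    unfolding Q_def m fls_deriv_sum_poly_powers by (simp only: mult.commute)
  then have "Q * fls_deriv f = - (\<Sum>k\<le>m. fls_of_poly (pderiv (p k)) * f ^ k)"
    using p(2) by (simp add: eq_neg_iff_add_eq_0)
  moreover have "Q \<in> poly_subring f" "(\<Sum>k\<le>m. fls_of_poly (pderiv (p k)) * f ^ k) \<in> poly_subring f"
    unfolding Q_def by (intro poly_subring_sum poly_subring.mult poly_subring.poly
        poly_subring_power poly_subring.gen)+
  ultimately have Qf: "Q * fls_deriv f \<in> poly_subring f" "Q \<in> poly_subring f"
    by (simp_all add: poly_subring_uminus)
  have "Q ^ (2 * m) * (fls_deriv ^^ i) f \<in> rat_funs_span m (\<lambda>k. f ^ k)" if "i \<le> m" for i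
  proof -
    have "Q ^ (2 * m) * (fls_deriv ^^ i) f = Q ^ (2 * m - 2 * i) * (Q ^ (2 * i) * (fls_deriv ^^ i) f)"
      using that by (simp add: mult.assoc flip: power_add)
    also have "\<dots> \<in> poly_subring f"
      by (rule poly_subring.mult[OF poly_subring_power[OF Qf(2)] poly_subring_higher_deriv[OF Qf(2,1)]])
    finally show ?thesis
      using poly_subring_subset_rat_funs_span[of m p f] p m by auto
  qed
  then have "rat_funs_dependent {..m} (\<lambda>i. Q ^ (2 * m) * (fls_deriv ^^ i) f)"
    by (intro rat_funs_dependent_if_card_gt[where d = m]) auto
  then obtain q where q: "\<forall>i\<le>m. q i \<in> rat_funs" "\<exists>i\<le>m. q i \<noteq> 0"
    "(\<Sum>i\<le>m. q i * (Q ^ (2 * m) * (fls_deriv ^^ i) f)) = 0"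
    unfolding rat_funs_dependent_def by auto
  have "Q ^ (2 * m) * (\<Sum>i\<le>m. q i * (fls_deriv ^^ i) f) = 0"
    using q(3) by (simp add: sum_distrib_left mult_ac)
  with \<open>Q \<noteq> 0\<close> q(1,2) show ?thesis
    unfolding differentially_finite_def by auto
qed

section \<open>Coefficient recurrences of linear differential equations\<close>

lemma fps_to_fls_sum: "fps_to_fls (sum f A) = (\<Sum>x\<in>A. fps_to_fls (f x))"
  by (induction A rule: infinite_finite_induct) simp_all

lemma fls_higher_deriv_fps_to_fls:
  "(fls_deriv ^^ i) (fps_to_fls g) = fps_to_fls ((fps_deriv ^^ i) g)"
  by (induction i) (simp_all add: fls_deriv_fps_to_fls)

lemma fps_higher_deriv_nth:
  fixes g :: "'a::comm_ring_1 fps"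
  shows "(fps_deriv ^^ i) g $ k = pochhammer (of_nat (k + 1)) i * g $ (k + i)"
proof (induction i arbitrary: k)
  case (Suc i)
  then show ?case
    by (simp add: pochhammer_rec algebra_simps)
qed simp

lemma differentially_finite_fps_to_flsE:
  assumes "differentially_finite (fps_to_fls g)"
  obtains p e where "p e \<noteq> 0" "(\<Sum>i\<le>e. fps_of_poly (p i) * (fps_deriv ^^ i) g) = 0"
proof -
  obtain d q where "\<forall>i\<le>d. q i \<in> rat_funs" "\<exists>i\<le>d. q i \<noteq> 0"
    "(\<Sum>i\<le>d. q i * (fls_deriv ^^ i) (fps_to_fls g)) = 0"
    using assms unfolding differentially_finite_def by blast
  then obtain e p where "p e \<noteq> 0"
    and "(\<Sum>i\<le>e. fls_of_poly (p i) * (fls_deriv ^^ i) (fps_to_fls g)) = 0"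
    by (rule rat_funs_relation_clear_denominators)
  then have "fps_to_fls (\<Sum>i\<le>e. fps_of_poly (p i) * (fps_deriv ^^ i) g) = 0"
    by (simp add: fls_higher_deriv_fps_to_fls fps_to_fls_sum fls_times_fps_to_fls)
  with \<open>p e \<noteq> 0\<close> show ?thesis
    using that[of p e] by simp
qed

lemma fps_poly_ode_coeff_recurrence:
  fixes p :: "nat \<Rightarrow> 'a::comm_ring_1 poly"
  assumes "(\<Sum>i\<le>d. fps_of_poly (p i) * (fps_deriv ^^ i) g) = 0"
    and "\<forall>i\<le>d. degree (p i) \<le> S" and "S \<le> n"
  shows "(\<Sum>(i, s)\<in>{..d} \<times> {..S}. coeff (p i) s * pochhammer (of_nat (n - s + 1)) i * g $ (n - s + i)) = 0"
proof -
  have "(\<Sum>(i, s)\<in>{..d} \<times> {..S}. coeff (p i) s * pochhammer (of_nat (n - s + 1)) i * g $ (n - s + i))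
      = (\<Sum>i\<le>d. \<Sum>s\<le>S. coeff (p i) s * ((fps_deriv ^^ i) g $ (n - s)))"
    unfolding sum.cartesian_product[symmetric] fps_higher_deriv_nth by (simp only: mult.assoc)
  also have "\<dots> = (\<Sum>i\<le>d. \<Sum>s=0..n. coeff (p i) s * ((fps_deriv ^^ i) g $ (n - s)))"
  proof (rule sum.cong[OF refl])
    fix i
    assume "i \<in> {..d}"
    then have "degree (p i) < s" if "s \<notin> {..S}" for s
      using assms(2) that by fastforce
    then show "(\<Sum>s\<le>S. coeff (p i) s * ((fps_deriv ^^ i) g $ (n - s))) =
        (\<Sum>s=0..n. coeff (p i) s * ((fps_deriv ^^ i) g $ (n - s)))"
      using \<open>S \<le> n\<close> by (intro sum.mono_neutral_left) (auto simp: coeff_eq_0)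
  qed
  also have "\<dots> = (\<Sum>i\<le>d. fps_of_poly (p i) * (fps_deriv ^^ i) g) $ n"
    by (simp add: fps_sum_nth fps_mult_nth)
  finally show ?thesis
    using assms(1) by simp
qed

lemma fps_poly_ode_shifted_recurrence:
  fixes a :: "nat \<Rightarrow> 'a::field" and p :: "nat \<Rightarrow> 'a poly"
  assumes "(\<Sum>i\<le>e. fps_of_poly (p i) * (fps_deriv ^^ i) (Abs_fps a)) = 0"
    and "\<forall>i\<le>e. degree (p i) \<le> S"
  shows "\<forall>\<^sub>F n in sequentially. (\<Sum>(i, s)\<in>{..e} \<times> {..S}.
    coeff (p i) s * pochhammer (of_nat (n - s + 1)) i / of_nat n ^ e * a (nat (int n + (int i - int s)))) = 0"
  using eventually_ge_at_top[of S]
proof eventually_elim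
  case (elim n)
  have "(\<Sum>(i, s)\<in>{..e} \<times> {..S}.
      coeff (p i) s * pochhammer (of_nat (n - s + 1)) i / of_nat n ^ e * a (nat (int n + (int i - int s)))) =
    (\<Sum>(i, s)\<in>{..e} \<times> {..S}. coeff (p i) s * pochhammer (of_nat (n - s + 1)) i * Abs_fps a $ (n - s + i))
      / of_nat n ^ e"
    unfolding sum_divide_distrib
  proof (intro sum.cong refl)
    fix x
    assume "x \<in> {..e} \<times> {..S}"
    then obtain i s where x: "x = (i, s)" and "s \<le> n"
      using elim by auto
    then have "nat (int n + (int i - int s)) = n - s + i"
      by simp
    then show "(case x of (i, s) \<Rightarrow> coeff (p i) s * pochhammer (of_nat (n - s + 1)) i / of_nat n ^ e *
        a (nat (int n + (int i - int s)))) =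
      (case x of (i, s) \<Rightarrow> coeff (p i) s * pochhammer (of_nat (n - s + 1)) i * Abs_fps a $ (n - s + i))
        / of_nat n ^ e"
      by (simp add: x)
  qed
  also have "\<dots> = 0"
    using fps_poly_ode_coeff_recurrence[OF assms elim] by simp
  finally show ?case .
qed

lemma tendsto_pochhammer_over_power:
  assumes "i \<le> e"
  shows "(\<lambda>n. pochhammer (of_nat (n - s + 1) :: 'a::real_normed_field) i / of_nat n ^ e)
    \<longlonglongrightarrow> (if i = e then 1 else 0)"
proof -
  have eq: "\<forall>\<^sub>F n in sequentially.
      (\<Prod>k<i. 1 + (of_nat (k + 1) - of_nat s) / of_nat n) * (1 / of_nat n) ^ (e - i) =
      pochhammer (of_nat (n - s + 1) :: 'a) i / of_nat n ^ e"
    using eventually_ge_at_top[of "s + 1"]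
  proof eventually_elim
    case (elim n)
    then have "(of_nat (n - s + 1) :: 'a) = of_nat n - of_nat s + 1"
      by (simp add: of_nat_diff)
    then have "(\<Prod>k<i. 1 + (of_nat (k + 1) - of_nat s) / of_nat n) =
        (\<Prod>k<i. of_nat (n - s + 1) + of_nat k) / (of_nat n ^ i :: 'a)"
      using elim by (simp add: prod_dividef field_simps)
    moreover have "(of_nat n :: 'a) ^ e = of_nat n ^ i * of_nat n ^ (e - i)"
      using assms by (simp flip: power_add)
    ultimately show ?case
      by (simp add: pochhammer_prod atLeast0LessThan power_one_over)
  qed
  have "(\<lambda>n. (\<Prod>k<i. 1 + (of_nat (k + 1) - of_nat s) / of_nat n) * (1 / of_nat n) ^ (e - i))
      \<longlonglongrightarrow> (\<Prod>k<i. 1 + (0::'a)) * 0 ^ (e - i)"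
    by (intro tendsto_mult tendsto_prod tendsto_add tendsto_const lim_const_over_n tendsto_power
        lim_1_over_n)
  also have "(\<Prod>k<i. 1 + (0::'a)) * 0 ^ (e - i) = (if i = e then 1 else 0)"
    using assms by simp
  finally show ?thesis
    using eq by (rule Lim_transform_eventually)
qed

section \<open>Sequences with sharp peaks\<close>

definition has_sharp_peaks :: "(nat \<Rightarrow> 'a::real_normed_vector) \<Rightarrow> bool" where
  "has_sharp_peaks a \<longleftrightarrow> (\<forall>N::nat. infinite {m::nat. \<forall>j::int. 1 \<le> \<bar>j\<bar> \<and> \<bar>j\<bar> \<le> int N \<and> int m + j \<ge> 0
     \<longrightarrow> norm (a m) > real N * norm (a (nat (int m + j)))})"

lemma has_sharp_peaks_shiftedE:
  assumes "has_sharp_peaks a" "0 < N"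
  obtains n where "k \<le> n" "a (nat (int n + t0)) \<noteq> 0"
    "\<forall>s. s \<noteq> t0 \<and> \<bar>s - t0\<bar> \<le> int N \<longrightarrow>
      real N * norm (a (nat (int n + s))) < norm (a (nat (int n + t0)))"
proof -
  have "infinite {m::nat. \<forall>j::int. 1 \<le> \<bar>j\<bar> \<and> \<bar>j\<bar> \<le> int N \<and> int m + j \<ge> 0
      \<longrightarrow> norm (a m) > real N * norm (a (nat (int m + j)))}"
    using assms(1) unfolding has_sharp_peaks_def by (rule spec)
  then obtain m where "k + N + nat \<bar>t0\<bar> \<le> m" and peak: "\<forall>j::int. 1 \<le> \<bar>j\<bar> \<and> \<bar>j\<bar> \<le> int N \<and>
      int m + j \<ge> 0 \<longrightarrow> norm (a m) > real N * norm (a (nat (int m + j)))"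
    unfolding infinite_nat_iff_unbounded_le by blast
  define n where "n = nat (int m - t0)"
  have "k \<le> n" "int n + t0 = int m"
    using \<open>k + N + nat \<bar>t0\<bar> \<le> m\<close> unfolding n_def by linarith+
  have "real N * norm (a (nat (int m + 1))) < norm (a m)"
    using peak[rule_format, of 1] assms(2) by simp
  moreover have "0 \<le> real N * norm (a (nat (int m + 1)))"
    by simp
  ultimately have "a m \<noteq> 0"
    by force
  moreover have "real N * norm (a (nat (int n + s))) < norm (a m)"
    if "s \<noteq> t0" "\<bar>s - t0\<bar> \<le> int N" for s
  proof -
    have shift: "int n + s = int m + (s - t0)" and "0 \<le> int m + (s - t0)"
      using \<open>int n + t0 = int m\<close> \<open>k + N + nat \<bar>t0\<bar> \<le> m\<close> that(2) by linarith+
    then show ?thesis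
      using peak[rule_format, of "s - t0"] that unfolding shift by simp
  qed
  ultimately show ?thesis
    using that \<open>k \<le> n\<close> \<open>int n + t0 = int m\<close> by simp
qed

lemma norm_dominant_coeff_le:
  fixes h b :: "'i \<Rightarrow> 'a::real_normed_field" and N :: real
  assumes "0 \<le> N" "finite I" "T \<subseteq> I" "(\<Sum>x\<in>I. h x * b x) = 0"
    and "\<And>x. x \<in> T \<Longrightarrow> b x = \<beta>"
    and "\<And>x. x \<in> I - T \<Longrightarrow> N * norm (b x) \<le> norm \<beta>"
    and "\<And>x. x \<in> I \<Longrightarrow> norm (h x) \<le> B x"
  shows "N * norm (\<Sum>x\<in>T. h x) * norm \<beta> \<le> (\<Sum>x\<in>I. B x) * norm \<beta>"
proof -
  have "(\<Sum>x\<in>T. h x) * \<beta> = - (\<Sum>x\<in>I - T. h x * b x)"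
    using assms(4,5) sum.subset_diff[OF assms(3,2), of "\<lambda>x. h x * b x"]
    by (simp add: sum_distrib_right eq_neg_iff_add_eq_0 add.commute)
  then have "N * norm (\<Sum>x\<in>T. h x) * norm \<beta> = N * norm (\<Sum>x\<in>I - T. h x * b x)"
    by (simp only: mult.assoc norm_mult[symmetric] norm_minus_cancel)
  also have "\<dots> \<le> (\<Sum>x\<in>I - T. norm (h x) * (N * norm (b x)))"
  proof -
    have "norm (\<Sum>x\<in>I - T. h x * b x) \<le> (\<Sum>x\<in>I - T. norm (h x) * norm (b x))"
      by (rule order_trans[OF norm_sum]) (simp add: norm_mult)
    then have "N * norm (\<Sum>x\<in>I - T. h x * b x) \<le> N * (\<Sum>x\<in>I - T. norm (h x) * norm (b x))"
      using assms(1) by (rule mult_left_mono)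
    then show ?thesis
      by (simp add: sum_distrib_left mult.left_commute)
  qed
  also have "\<dots> \<le> (\<Sum>x\<in>I - T. B x * norm \<beta>)"
    using assms(1,6,7) by (intro sum_mono mult_mono) (auto intro: order_trans[OF norm_ge_zero])
  also have "\<dots> \<le> (\<Sum>x\<in>I. B x) * norm \<beta>"
    unfolding sum_distrib_right using assms(2,7)
    by (intro sum_mono2) (auto intro: mult_nonneg_nonneg order_trans[OF norm_ge_zero])
  finally show ?thesis .
qed

lemma not_eventually_recurrence_if_sharp_peaks:
  fixes a :: "nat \<Rightarrow> 'a::real_normed_field" and h :: "'i \<Rightarrow> nat \<Rightarrow> 'a"
    and t :: "'i \<Rightarrow> int"
  assumes peaks: "has_sharp_peaks a" and "finite I"
    and lim: "\<And>x. x \<in> I \<Longrightarrow> h x \<longlonglongrightarrow> l x"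
    and dominant: "(\<Sum>x | x \<in> I \<and> t x = t0. l x) \<noteq> 0"
  shows "\<not> (\<forall>\<^sub>F n in sequentially. (\<Sum>x\<in>I. h x n * a (nat (int n + t x))) = 0)"
proof
  assume rec: "\<forall>\<^sub>F n in sequentially. (\<Sum>x\<in>I. h x n * a (nat (int n + t x))) = 0"
  define T where "T = {x. x \<in> I \<and> t x = t0}"
  define L where "L = norm (\<Sum>x\<in>T. l x)"
  define M where "M = (\<Sum>x\<in>I. norm (l x) + 1)"
  have "T \<subseteq> I" "0 < L"
    using dominant by (auto simp: L_def T_def)
  have "(\<lambda>n. norm (\<Sum>x\<in>T. h x n)) \<longlonglongrightarrow> L"
    unfolding L_def using lim \<open>T \<subseteq> I\<close> by (intro tendsto_norm tendsto_sum) auto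
  then have large: "\<forall>\<^sub>F n in sequentially. L / 2 < norm (\<Sum>x\<in>T. h x n)"
    using \<open>0 < L\<close> by (intro order_tendstoD(1)) auto
  have bounded: "\<forall>\<^sub>F n in sequentially. \<forall>x\<in>I. norm (h x n) < norm (l x) + 1"
  proof (intro eventually_ball_finite \<open>finite I\<close> ballI)
    fix x
    assume "x \<in> I"
    show "\<forall>\<^sub>F n in sequentially. norm (h x n) < norm (l x) + 1"
      using order_tendstoD(2)[OF tendsto_norm[OF lim[OF \<open>x \<in> I\<close>]], of "norm (l x) + 1"] by simp
  qed
  obtain n0 where n0: "\<And>n. n0 \<le> n \<Longrightarrow> (\<Sum>x\<in>I. h x n * a (nat (int n + t x))) = 0 \<and>
      L / 2 < norm (\<Sum>x\<in>T. h x n) \<and> (\<forall>x\<in>I. norm (h x n) < norm (l x) + 1)"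
    using eventually_conj[OF rec eventually_conj[OF large bounded]]
    unfolding eventually_sequentially by blast
  text \<open>\<open>N\<close> exceeds \<open>2 M / L\<close> and every relative shift \<open>|t x - t0|\<close>.\<close>
  define N where "N = 1 + nat \<lceil>2 * M / L\<rceil> + (\<Sum>x\<in>I. nat \<bar>t x - t0\<bar>)"
  have "0 < N" "2 * M / L \<le> real N"
    unfolding N_def by linarith+
  then have "2 * M \<le> real N * L"
    using \<open>0 < L\<close> by (simp add: pos_divide_le_eq)
  have shift_le: "\<bar>t x - t0\<bar> \<le> int N" if "x \<in> I" for x
    using member_le_sum[of x I "\<lambda>x. nat \<bar>t x - t0\<bar>"] that \<open>finite I\<close> unfolding N_def by linarith
  obtain n where "n0 \<le> n" "a (nat (int n + t0)) \<noteq> 0" and peak: "\<forall>s. s \<noteq> t0 \<and>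
      \<bar>s - t0\<bar> \<le> int N \<longrightarrow> real N * norm (a (nat (int n + s))) < norm (a (nat (int n + t0)))"
    using has_sharp_peaks_shiftedE[OF peaks \<open>0 < N\<close>, of n0 t0] by blast
  note n = n0[OF \<open>n0 \<le> n\<close>]
  have "real N * norm (\<Sum>x\<in>T. h x n) * norm (a (nat (int n + t0))) \<le> M * norm (a (nat (int n + t0)))"
    unfolding M_def
  proof (rule norm_dominant_coeff_le[OF _ \<open>finite I\<close> \<open>T \<subseteq> I\<close>])
    fix x
    assume "x \<in> I - T"
    then show "real N * norm (a (nat (int n + t x))) \<le> norm (a (nat (int n + t0)))"
      using peak n shift_le[of x] by (auto simp: T_def)
  qed (use n in \<open>auto simp: T_def less_imp_le\<close>)
  then have "real N * norm (\<Sum>x\<in>T. h x n) \<le> M"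
    using \<open>a (nat (int n + t0)) \<noteq> 0\<close> by (simp add: mult_le_cancel_right_pos)
  moreover have "real N * (L / 2) < real N * norm (\<Sum>x\<in>T. h x n)"
    using n \<open>0 < N\<close> by simp
  ultimately show False
    using \<open>2 * M \<le> real N * L\<close> by simp
qed

lemma not_differentially_finite_if_sharp_peaks:
  fixes a :: "nat \<Rightarrow> complex"
  assumes "has_sharp_peaks a"
  shows "\<not> differentially_finite (fps_to_fls (Abs_fps a))"
proof
  assume "differentially_finite (fps_to_fls (Abs_fps a))"
  then obtain p e where "p e \<noteq> 0"
    and ode: "(\<Sum>i\<le>e. fps_of_poly (p i) * (fps_deriv ^^ i) (Abs_fps a)) = 0"
    by (rule differentially_finite_fps_to_flsE)
  define S where "S = Max ((\<lambda>i. degree (p i)) ` {..e})"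
  have deg: "\<forall>i\<le>e. degree (p i) \<le> S"
    by (simp add: S_def)
  define I where "I = {..e} \<times> {..S}"
  define h where "h = (\<lambda>(i, s) n. coeff (p i) s * pochhammer (of_nat (n - s + 1)) i / of_nat n ^ e)"
  define l where "l = (\<lambda>(i, s). if i = e then coeff (p i) s else 0)"
  define t where "t = (\<lambda>(i, s). int i - int s)"
  have "finite I"
    by (simp add: I_def)
  have lim: "h x \<longlonglongrightarrow> l x" if "x \<in> I" for x
  proof -
    obtain i s where x: "x = (i, s)" and "i \<le> e"
      using \<open>x \<in> I\<close> by (auto simp: I_def)
    have "h x = (\<lambda>n. coeff (p i) s * (pochhammer (of_nat (n - s + 1)) i / of_nat n ^ e))"
      and "l x = coeff (p i) s * (if i = e then 1 else 0)"
      by (simp_all add: x h_def l_def fun_eq_iff)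
    then show ?thesis
      using \<open>i \<le> e\<close> by (simp only:) (intro tendsto_mult tendsto_const tendsto_pochhammer_over_power)
  qed
  have dominant: "(\<Sum>x | x \<in> I \<and> t x = int e - int (degree (p e)). l x) \<noteq> 0"
  proof -
    have "(\<Sum>x | x \<in> I \<and> t x = int e - int (degree (p e)). l x) =
        (\<Sum>x | x \<in> I \<and> t x = int e - int (degree (p e)). if x = (e, degree (p e)) then lead_coeff (p e) else 0)"
      by (intro sum.cong refl) (auto simp: l_def t_def split: if_splits)
    also have "\<dots> = lead_coeff (p e)"
      using deg \<open>finite I\<close> by (simp add: I_def t_def)
    finally show ?thesis
      using \<open>p e \<noteq> 0\<close> by simp
  qed
  have "\<forall>\<^sub>F n in sequentially. (\<Sum>x\<in>I. h x n * a (nat (int n + t x))) = 0"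
    using fps_poly_ode_shifted_recurrence[OF ode deg] by (simp add: I_def h_def t_def split_def)
  then show False
    using not_eventually_recurrence_if_sharp_peaks[OF assms \<open>finite I\<close> lim dominant] by blast
qed

theorem proposition6p2:
  fixes a :: "nat \<Rightarrow> complex"
  assumes "\<forall>N::nat. infinite {m::nat. \<forall>j::int. 1 \<le> \<bar>j\<bar> \<and> \<bar>j\<bar> \<le> int N \<and> int m + j \<ge> 0
              \<longrightarrow> cmod (a m) > real N * cmod (a (nat (int m + j)))}"
  shows "\<not> differentially_finite (fps_to_fls (Abs_fps a)) \<and>
         \<not> algebraic_over_rat_funs (fps_to_fls (Abs_fps a))"
proof -
  have "has_sharp_peaks a"
    using assms unfolding has_sharp_peaks_def .
  then show ?thesis
    using not_differentially_finite_if_sharp_peaks differentially_finite_if_algebraic by blast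
qed

end
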